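(* There is a function $g$ such that the following holds. Let $A \in \mathbb{Z}^{m \times n}$ and let $F$ be a td-decomposition of the dual graph $G_D(A)$. Let $A_B \in \mathbb{Z}^{m \times m}$ be a submatrix of $A$ formed by a collection of $m$ columns of $A$ which is invertible. Then $\mathrm{fr}(A_B^{-1}) \le g(\mathrm{height}(F), \|A\|_\infty)$.
   Context: The primal graph $G_P(M)$ of a matrix $M$ has one vertex per column of $M$, two columns adjacent if some row has non-zero entries in both; the dual graph is $G_D(A) := G_P(A^{\intercal})$ (vertices are rows of $A$, adjacent if some column has non-zero entries in both). For a rooted tree $F$, $\mathrm{cl}(F)$ is the graph obtained by making each vertex adjacent to all its ancestors; $\mathrm{height}(F)$ is the maximum number of vertices on a root-leaf path. A td-decomposition of a graph $G$ is a rooted tree $F$ on the vertex set of $G$ with $G \subseteq \mathrm{cl}(F)$. For a rational matrix $M$, $\mathrm{fr}(M)$ is the maximum denominator among its entries written in lowest terms. *)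

theory Defs
  imports "Jordan_Normal_Form.DL_Submatrix"
begin

definition dual_graph_edge :: "int mat \<Rightarrow> nat \<Rightarrow> nat \<Rightarrow> bool" where
  "dual_graph_edge A i j \<longleftrightarrow> i < dim_row A \<and> j < dim_row A \<and> i \<noteq> j \<and>
     (\<exists>k < dim_col A. A $$ (i,k) \<noteq> 0 \<and> A $$ (j,k) \<noteq> 0)"

(* A rooted tree on the finite vertex set V, given by its child-parent edge set P:
   (v,u) \<in> P means u is the parent of v. *)
definition rooted_tree :: "nat set \<Rightarrow> (nat \<times> nat) set \<Rightarrow> bool" where
  "rooted_tree V P \<longleftrightarrow> finite V \<and> P \<subseteq> V \<times> V \<and>
     (\<forall>v u w. (v,u) \<in> P \<longrightarrow> (v,w) \<in> P \<longrightarrow> u = w) \<and>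
     (\<forall>v. (v,v) \<notin> P\<^sup>+) \<and>
     (V \<noteq> {} \<longrightarrow> (\<exists>!r. r \<in> V \<and> (\<forall>u. (r,u) \<notin> P)))"

definition ancestor :: "(nat \<times> nat) set \<Rightarrow> nat \<Rightarrow> nat \<Rightarrow> bool" where
  "ancestor P u v \<longleftrightarrow> (v,u) \<in> P\<^sup>+"

definition closure_adj :: "(nat \<times> nat) set \<Rightarrow> nat \<Rightarrow> nat \<Rightarrow> bool" where
  "closure_adj P u v \<longleftrightarrow> ancestor P u v \<or> ancestor P v u"

(* height: maximum number of vertices on a root-leaf path, i.e. the maximum over
   vertices v of the number of vertices on the path from v to the root (0 if V = {}) *)
definition tree_height :: "nat set \<Rightarrow> (nat \<times> nat) set \<Rightarrow> nat" where
  "tree_height V P = Max (insert 0 ((\<lambda>v. card {u. (v,u) \<in> P\<^sup>*}) ` V))"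

definition td_decomposition :: "nat set \<Rightarrow> (nat \<Rightarrow> nat \<Rightarrow> bool) \<Rightarrow> (nat \<times> nat) set \<Rightarrow> bool" where
  "td_decomposition V E P \<longleftrightarrow> rooted_tree V P \<and> (\<forall>u v. E u v \<longrightarrow> closure_adj P u v)"

(* fr(M): maximum denominator among the entries (in lowest terms); 1 for an empty matrix *)
definition fr :: "rat mat \<Rightarrow> int" where
  "fr M = Max (insert 1 {snd (quotient_of (M $$ (i,j))) | i j. i < dim_row M \<and> j < dim_col M})"

definition max_abs_entry :: "int mat \<Rightarrow> int" where
  "max_abs_entry A = Max (insert 0 {\<bar>A $$ (i,j)\<bar> | i j. i < dim_row A \<and> j < dim_col A})"

end

theory Submission
  imports Defs "Jordan_Normal_Form.Determinant"
begin

text \<open>Column j of the inverse of the basis matrix, extended by an entry 1, spans the kernel of the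
  basis matrix augmented by the column -e_j, so it is a circuit of an integer matrix whose dual
  graph still has the td-decomposition F. Deleting the
  top row v of a subtree leaves the subtrees of the children of v, which share no column; so every
  circuit of the remaining rows lives in one child subtree and, scaled to be integral, has l1-norm
  at most K by induction. A circuit z of the whole subtree vanishes on row v, so among the circuits
  of the remaining rows conformal to z there are two, w1 and w2, with opposite signs on row v; the
  combination of their integral scalings that vanishes on row v is an integral positive multiple
  of z of l1-norm at most K + 2 D K^2, where D bounds the entries. Finally, if t z is the integral
  multiple of the extended inverse column, then t = t z_m is an integer bounded in terms of the
  height and D, and it clears all denominators of the column.\<close>

section \<open>Circuits and conformal decomposition\<close>

text \<open>A matrix is given by its entry function \<open>a\<close> together with a set \<open>R\<close> of rows and a set \<open>C\<close>
  of columns, so that deleting rows just shrinks \<open>R\<close>.\<close>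

definition in_kernel :: "(nat \<Rightarrow> nat \<Rightarrow> 'a::comm_ring_1) \<Rightarrow> nat set \<Rightarrow> nat set \<Rightarrow> (nat \<Rightarrow> 'a) \<Rightarrow> bool"
  where "in_kernel a C R x \<longleftrightarrow>
    (\<forall>c. c \<notin> C \<longrightarrow> x c = 0) \<and> (\<forall>r\<in>R. (\<Sum>c\<in>C. a r c * x c) = 0)"

definition supp :: "(nat \<Rightarrow> 'a::zero) \<Rightarrow> nat set"
  where "supp x = {c. x c \<noteq> 0}"

definition circuit :: "(nat \<Rightarrow> nat \<Rightarrow> 'a::comm_ring_1) \<Rightarrow> nat set \<Rightarrow> nat set \<Rightarrow> (nat \<Rightarrow> 'a) \<Rightarrow> bool"
  where "circuit a C R z \<longleftrightarrow> in_kernel a C R z \<and> z \<noteq> (\<lambda>_. 0) \<and>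
    (\<forall>y. in_kernel a C R y \<longrightarrow> supp y \<subseteq> supp z \<longrightarrow> (\<exists>t. y = (\<lambda>c. t * z c)))"

definition conformal :: "(nat \<Rightarrow> 'a::linordered_idom) \<Rightarrow> (nat \<Rightarrow> 'a) \<Rightarrow> bool"
  where "conformal y x \<longleftrightarrow> (\<forall>c. 0 \<le> y c * x c \<and> (x c = 0 \<longrightarrow> y c = 0))"

definition integral_multiple_le :: "nat set \<Rightarrow> 'a::linordered_field \<Rightarrow> (nat \<Rightarrow> 'a) \<Rightarrow> bool"
  where "integral_multiple_le C K z \<longleftrightarrow>
    (\<exists>t>0. (\<forall>c. t * z c \<in> \<int>) \<and> (\<Sum>c\<in>C. \<bar>t * z c\<bar>) \<le> K)"

definition separated :: "(nat \<Rightarrow> nat \<Rightarrow> 'a::zero) \<Rightarrow> nat set \<Rightarrow> nat set \<Rightarrow> nat set \<Rightarrow> bool"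
  where "separated a C S T \<longleftrightarrow> (\<forall>s\<in>S. \<forall>r\<in>T. \<forall>c\<in>C. a s c \<noteq> 0 \<longrightarrow> a r c = 0)"

lemma circuitD:
  assumes "circuit a C R z"
  shows "in_kernel a C R z" and "z \<noteq> (\<lambda>_. 0)"
    and "in_kernel a C R y \<Longrightarrow> supp y \<subseteq> supp z \<Longrightarrow> \<exists>t. y = (\<lambda>c. t * z c)"
  using assms unfolding circuit_def by blast+

lemma in_kernel_lincomb:
  assumes "in_kernel a C R x" "in_kernel a C R y"
  shows "in_kernel a C R (\<lambda>c. p * x c + q * y c)"
proof -
  have "(\<Sum>c\<in>C. a r c * (p * x c + q * y c)) =
      p * (\<Sum>c\<in>C. a r c * x c) + q * (\<Sum>c\<in>C. a r c * y c)" for r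
    by (simp add: sum.distrib sum_distrib_left algebra_simps)
  then show ?thesis
    using assms unfolding in_kernel_def by auto
qed

lemma in_kernel_scale: "in_kernel a C R x \<Longrightarrow> in_kernel a C R (\<lambda>c. p * x c)"
  using in_kernel_lincomb[of a C R x x p 0] by simp

lemma in_kernel_diff:
  "in_kernel a C R x \<Longrightarrow> in_kernel a C R y \<Longrightarrow> in_kernel a C R (\<lambda>c. x c - q * y c)"
  using in_kernel_lincomb[of a C R x y 1 "- q"] by simp

lemma in_kernel_mono: "in_kernel a C R x \<Longrightarrow> S \<subseteq> R \<Longrightarrow> in_kernel a C S x"
  unfolding in_kernel_def by auto

lemma in_kernel_insert:
  "in_kernel a C (insert v R) x \<longleftrightarrow> in_kernel a C R x \<and> (\<Sum>c\<in>C. a v c * x c) = 0"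
  unfolding in_kernel_def by auto

lemma finite_supp_in_kernel: "in_kernel a C R x \<Longrightarrow> finite C \<Longrightarrow> finite (supp x)"
  unfolding in_kernel_def supp_def by (metis (mono_tags) mem_Collect_eq rev_finite_subset subsetI)

lemma conformal_refl: "conformal x x"
  unfolding conformal_def by auto

lemma conformal_trans:
  assumes "conformal g y" "conformal y x"
  shows "conformal g x"
  unfolding conformal_def
proof (intro allI conjI impI)
  fix c
  show "x c = 0 \<Longrightarrow> g c = 0"
    using assms unfolding conformal_def by simp
  show "0 \<le> g c * x c"
  proof (cases "y c = 0")
    case True
    then show ?thesis
      using assms(1) unfolding conformal_def by simp
  next
    case False
    have "0 \<le> (g c * y c) * (y c * x c)"
      using assms unfolding conformal_def by simp
    also have "\<dots> = (g c * x c) * (y c * y c)"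
      by (simp add: algebra_simps)
    finally have "0 \<le> (g c * x c) * (y c * y c)" .
    moreover have "0 < y c * y c"
      using False by (simp add: less_le)
    ultimately show ?thesis
      by (meson not_le mult_neg_pos)
  qed
qed

lemma supp_conformal: "conformal y x \<Longrightarrow> supp y \<subseteq> supp x"
  unfolding conformal_def supp_def by auto

lemma conformal_product_pos: "conformal y x \<Longrightarrow> y c \<noteq> 0 \<Longrightarrow> 0 < y c * x c"
  unfolding conformal_def by (metis le_less mult_eq_0_iff)

lemma conformal_pos_combination:
  assumes "conformal w1 z" "conformal w2 z" "0 < p" "0 \<le> q"
  shows "conformal (\<lambda>c. p * w1 c + q * w2 c) z"
  using assms unfolding conformal_def by (auto simp: distrib_right mult.assoc)

lemma pos_combination_nonzero:
  assumes "conformal w1 z" "conformal w2 z" "0 < p" "0 \<le> q" "w1 \<noteq> (\<lambda>_. 0)"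
  shows "(\<lambda>c. p * w1 c + q * w2 c) \<noteq> (\<lambda>_. 0)"
proof -
  obtain c where "w1 c \<noteq> 0"
    using assms(5) by auto
  then have "0 < p * (w1 c * z c) + q * (w2 c * z c)"
    using assms conformal_product_pos[of w1 z c] unfolding conformal_def
    by (simp add: add_pos_nonneg)
  then have "(p * w1 c + q * w2 c) * z c \<noteq> 0"
    by (simp add: algebra_simps)
  then show ?thesis
    by (auto dest: fun_cong[where x = c])
qed

lemma conformal_diff_if_le_ratios:
  fixes y v :: "nat \<Rightarrow> 'a::linordered_field"
  assumes "supp v \<subseteq> supp y" "0 \<le> \<mu>" and le_ratios: "\<And>c. 0 < v c * y c \<Longrightarrow> \<mu> \<le> y c / v c"
  shows "conformal (\<lambda>c. y c - \<mu> * v c) y"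
  unfolding conformal_def
proof (intro allI conjI impI)
  fix c
  show "y c = 0 \<Longrightarrow> y c - \<mu> * v c = 0"
    using assms(1) unfolding supp_def by auto
  have "\<mu> * (v c * y c) \<le> y c * y c"
  proof (cases "0 < v c * y c")
    case True
    then have "\<mu> * (v c * y c) \<le> y c / v c * (v c * y c)"
      by (intro mult_right_mono le_ratios) simp_all
    also have "\<dots> = (y c / v c * v c) * y c"
      by (simp only: ac_simps)
    also have "\<dots> = y c * y c"
      using True by (cases "v c = 0") auto
    finally show ?thesis .
  next
    case False
    then have "\<mu> * (v c * y c) \<le> 0"
      using \<open>0 \<le> \<mu>\<close> by (simp add: mult_nonneg_nonpos)
    then show ?thesis
      by (meson order_trans zero_le_square)
  qed
  then show "0 \<le> (y c - \<mu> * v c) * y c"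
    by (simp add: algebra_simps)
qed

text \<open>The ratio test of the simplex method: \<open>\<mu>\<close> is the least ratio \<open>x c / v c\<close> over the
  coordinates where \<open>v\<close> and \<open>x\<close> have the same sign.\<close>

lemma conformal_reduction_step:
  fixes a :: "nat \<Rightarrow> nat \<Rightarrow> 'a::linordered_field"
  assumes "finite C" "in_kernel a C R x" "in_kernel a C R v" "supp v \<subseteq> supp x"
    and "0 < v c0 * x c0"
  obtains \<mu> where "0 < \<mu>" "in_kernel a C R (\<lambda>c. x c - \<mu> * v c)"
    "conformal (\<lambda>c. x c - \<mu> * v c) x" "card (supp (\<lambda>c. x c - \<mu> * v c)) < card (supp x)"
proof -
  define S where "S = {c. 0 < v c * x c}"
  have "finite (supp x)"
    using finite_supp_in_kernel[OF assms(2,1)] .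
  moreover have "S \<subseteq> supp x"
    unfolding S_def supp_def by auto
  ultimately have "finite S"
    by (rule finite_subset[rotated])
  define \<mu> where "\<mu> = Min ((\<lambda>c. x c / v c) ` S)"
  have "c0 \<in> S"
    using assms(5) unfolding S_def by simp
  then have "\<mu> \<in> (\<lambda>c. x c / v c) ` S"
    unfolding \<mu>_def using \<open>finite S\<close> by (intro Min_in) auto
  then obtain c1 where c1: "0 < v c1 * x c1" "\<mu> = x c1 / v c1"
    unfolding S_def by auto
  then have "0 < \<mu>"
    by (auto simp: zero_less_mult_iff zero_less_divide_iff)
  have conformal: "conformal (\<lambda>c. x c - \<mu> * v c) x"
    using \<open>finite S\<close> \<open>0 < \<mu>\<close> assms(4) unfolding \<mu>_def S_def
    by (intro conformal_diff_if_le_ratios) (auto intro: Min_le)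
  have "v c1 \<noteq> 0" "x c1 \<noteq> 0"
    using c1(1) by auto
  then have "c1 \<in> supp x - supp (\<lambda>c. x c - \<mu> * v c)"
    using c1(2) unfolding supp_def by simp
  then have "supp (\<lambda>c. x c - \<mu> * v c) \<subset> supp x"
    using supp_conformal[OF conformal] by blast
  then have "card (supp (\<lambda>c. x c - \<mu> * v c)) < card (supp x)"
    using \<open>finite (supp x)\<close> by (rule psubset_card_mono[rotated])
  then show ?thesis
    using that \<open>0 < \<mu>\<close> in_kernel_diff[OF assms(2,3)] conformal by blast
qed

lemma exists_smaller_conformal_kernel_vector:
  fixes a :: "nat \<Rightarrow> nat \<Rightarrow> 'a::linordered_field"
  assumes "finite C" "in_kernel a C R x"
    and y: "in_kernel a C R y" "supp y \<subseteq> supp x" "\<nexists>t. y = (\<lambda>c. t * x c)"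
  obtains x' where "in_kernel a C R x'" "x' \<noteq> (\<lambda>_. 0)" "conformal x' x"
    "card (supp x') < card (supp x)"
proof -
  have "y \<noteq> (\<lambda>_. 0)"
  proof
    assume "y = (\<lambda>_. 0)"
    then have "y = (\<lambda>c. 0 * x c)"
      by simp
    then show False
      using y(3) by blast
  qed
  then obtain c0 where "y c0 \<noteq> 0"
    by auto
  moreover have "x c0 \<noteq> 0"
    using y(2) calculation unfolding supp_def by auto
  ultimately have "y c0 * x c0 \<noteq> 0"
    by simp
  define s :: 'a where "s = (if 0 < y c0 * x c0 then 1 else -1)"
  define v where "v c = s * y c" for c
  have sign: "0 < (if 0 < t then 1 else -1) * t" if "t \<noteq> 0" for t :: 'a
    using that by (auto simp: linorder_neq_iff)
  have "0 < s * (y c0 * x c0)"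
    unfolding s_def using sign[OF \<open>y c0 * x c0 \<noteq> 0\<close>] .
  then have "0 < v c0 * x c0"
    unfolding v_def by (simp add: mult.assoc)
  moreover have "supp v \<subseteq> supp x"
    using y(2) unfolding v_def s_def supp_def by auto
  moreover have "in_kernel a C R v"
    unfolding v_def[abs_def] by (rule in_kernel_scale[OF y(1)])
  ultimately obtain \<mu> where \<mu>: "0 < \<mu>" "in_kernel a C R (\<lambda>c. x c - \<mu> * v c)"
    "conformal (\<lambda>c. x c - \<mu> * v c) x" "card (supp (\<lambda>c. x c - \<mu> * v c)) < card (supp x)"
    using conformal_reduction_step[OF assms(1,2)] by blast
  have "(\<lambda>c. x c - \<mu> * v c) \<noteq> (\<lambda>_. 0)"
  proof
    assume "(\<lambda>c. x c - \<mu> * v c) = (\<lambda>_. 0)"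
    then have "v c = x c / \<mu>" for c
      using fun_cong[of _ _ c] \<open>0 < \<mu>\<close> by (fastforce simp: field_simps)
    moreover have "y c = s * v c" for c
      unfolding v_def s_def by simp
    ultimately have "y = (\<lambda>c. (s / \<mu>) * x c)"
      by (simp add: fun_eq_iff)
    then show False
      using y(3) by blast
  qed
  then show ?thesis
    using that \<mu>(2-4) by blast
qed

lemma exists_conformal_circuit:
  fixes a :: "nat \<Rightarrow> nat \<Rightarrow> 'a::linordered_field"
  assumes "finite C" "in_kernel a C R x" "x \<noteq> (\<lambda>_. 0)"
  shows "\<exists>g. circuit a C R g \<and> conformal g x"
  using assms(2,3)
proof (induction "card (supp x)" arbitrary: x rule: less_induct)
  case (less x)
  show ?case
  proof (cases "circuit a C R x")
    case True
    then show ?thesis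
      using conformal_refl by blast
  next
    case False
    then obtain y where "in_kernel a C R y" "supp y \<subseteq> supp x" "\<nexists>t. y = (\<lambda>c. t * x c)"
      using less.prems unfolding circuit_def by blast
    then obtain x' where "in_kernel a C R x'" "x' \<noteq> (\<lambda>_. 0)" "conformal x' x"
      "card (supp x') < card (supp x)"
      using exists_smaller_conformal_kernel_vector[OF assms(1) less.prems(1)] by blast
    then show ?thesis
      using less.hyps conformal_trans by blast
  qed
qed

text \<open>Subtracting a conformal circuit \<open>g\<close> with \<open>b \<bullet> g > 0\<close> from \<open>x\<close> keeps \<open>b \<bullet> x < 0\<close>
  and shrinks the support.\<close>

lemma exists_conformal_circuit_nonpos:
  fixes a :: "nat \<Rightarrow> nat \<Rightarrow> 'a::linordered_field"
  assumes "finite C" "in_kernel a C R x" "x \<noteq> (\<lambda>_. 0)" "(\<Sum>c\<in>C. b c * x c) \<le> 0"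
  shows "\<exists>g. circuit a C R g \<and> conformal g x \<and> (\<Sum>c\<in>C. b c * g c) \<le> 0"
  using assms(2-4)
proof (induction "card (supp x)" arbitrary: x rule: less_induct)
  case (less x)
  obtain g where g: "circuit a C R g" "conformal g x"
    using exists_conformal_circuit[OF assms(1) less.prems(1,2)] by blast
  show ?case
  proof (cases "(\<Sum>c\<in>C. b c * g c) \<le> 0")
    case True
    then show ?thesis
      using g by blast
  next
    case False
    obtain c0 where "g c0 \<noteq> 0"
      using circuitD(2)[OF g(1)] by auto
    then have "0 < g c0 * x c0"
      using conformal_product_pos g(2) by blast
    then obtain \<mu> where \<mu>: "0 < \<mu>" "in_kernel a C R (\<lambda>c. x c - \<mu> * g c)"
      "conformal (\<lambda>c. x c - \<mu> * g c) x" "card (supp (\<lambda>c. x c - \<mu> * g c)) < card (supp x)"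
      using conformal_reduction_step[OF assms(1) less.prems(1) circuitD(1)[OF g(1)]
          supp_conformal[OF g(2)]] by blast
    have "(\<Sum>c\<in>C. b c * (x c - \<mu> * g c)) = (\<Sum>c\<in>C. b c * x c) - \<mu> * (\<Sum>c\<in>C. b c * g c)"
      by (simp add: sum_subtractf sum_distrib_left algebra_simps)
    also have "\<dots> < 0"
      using mult_pos_pos[OF \<mu>(1), of "\<Sum>c\<in>C. b c * g c"] False less.prems(3) by linarith
    finally have neg: "(\<Sum>c\<in>C. b c * (x c - \<mu> * g c)) < 0" .
    have "(\<lambda>c. x c - \<mu> * g c) \<noteq> (\<lambda>_. 0)"
    proof
      assume "(\<lambda>c. x c - \<mu> * g c) = (\<lambda>_. 0)"
      then have "(\<Sum>c\<in>C. b c * (x c - \<mu> * g c)) = 0"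
        by (simp add: fun_eq_iff)
      then show False
        using neg by simp
    qed
    then obtain g' where "circuit a C R g'" "conformal g' (\<lambda>c. x c - \<mu> * g c)"
      "(\<Sum>c\<in>C. b c * g' c) \<le> 0"
      using less.hyps \<mu>(2,4) neg by fastforce
    then show ?thesis
      using conformal_trans \<mu>(3) by blast
  qed
qed

lemma circuit_conformal_multiple:
  fixes z :: "nat \<Rightarrow> 'a::linordered_field"
  assumes "circuit a C R z" "in_kernel a C R w" "conformal w z" "w \<noteq> (\<lambda>_. 0)"
  shows "\<exists>s>0. w = (\<lambda>c. s * z c)"
proof -
  obtain s where s: "w = (\<lambda>c. s * z c)"
    using circuitD(3)[OF assms(1,2) supp_conformal[OF assms(3)]] by blast
  obtain c where "w c \<noteq> 0"
    using assms(4) by auto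
  then have "0 < s * (z c * z c)"
    using conformal_product_pos[OF assms(3)] s by (simp add: mult.assoc)
  then have "0 < s"
    by (simp add: zero_less_mult_iff)
  then show ?thesis
    using s by blast
qed

lemma integral_multiple_le_if_conformal:
  fixes z :: "nat \<Rightarrow> 'a::linordered_field"
  assumes "circuit a C R z" "in_kernel a C R w" "conformal w z" "w \<noteq> (\<lambda>_. 0)"
    and "\<forall>c. w c \<in> \<int>" "(\<Sum>c\<in>C. \<bar>w c\<bar>) \<le> K"
  shows "integral_multiple_le C K z"
proof -
  obtain s where "0 < s" "w = (\<lambda>c. s * z c)"
    using circuit_conformal_multiple[OF assms(1-4)] by blast
  then show ?thesis
    using assms(5,6) unfolding integral_multiple_le_def by blast
qed

lemma integral_multiple_le_mono:
  "integral_multiple_le C K z \<Longrightarrow> K \<le> K' \<Longrightarrow> integral_multiple_le C K' z"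
  unfolding integral_multiple_le_def by force

lemma integral_multiple_le_if_zero_column:
  fixes g :: "nat \<Rightarrow> 'a::linordered_field"
  assumes "finite C" "circuit a C R g" "g c0 \<noteq> 0" "\<forall>r\<in>R. a r c0 = 0"
  shows "integral_multiple_le C 1 g"
proof -
  have "c0 \<in> C"
    using circuitD(1)[OF assms(2)] assms(3) unfolding in_kernel_def by auto
  define e :: "nat \<Rightarrow> 'a" where "e c = (if c = c0 then 1 else 0)" for c
  have "in_kernel a C R e"
    using assms(1,4) \<open>c0 \<in> C\<close> unfolding in_kernel_def e_def by (simp add: if_distrib cong: if_cong)
  moreover have "supp e \<subseteq> supp g"
    using assms(3) unfolding supp_def e_def by auto
  ultimately obtain t where t: "e = (\<lambda>c. t * g c)"
    using circuitD(3)[OF assms(2)] by blast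
  then have "t \<noteq> 0"
    unfolding e_def by (metis mult_zero_left zero_neq_one)
  have scaled: "\<bar>t\<bar> * g c = sgn t * e c" for c
  proof -
    have "\<bar>t\<bar> * g c = sgn t * (t * g c)"
      by (simp only: abs_sgn ac_simps)
    also have "\<dots> = sgn t * e c"
      using fun_cong[OF t, of c] by simp
    finally show ?thesis .
  qed
  have "\<bar>t\<bar> * g c \<in> \<int>" for c
    unfolding scaled e_def by (simp add: sgn_if)
  moreover have "\<bar>\<bar>t\<bar> * g c\<bar> = e c" for c
    unfolding scaled using \<open>t \<noteq> 0\<close> by (simp add: abs_mult e_def)
  then have "(\<Sum>c\<in>C. \<bar>\<bar>t\<bar> * g c\<bar>) = 1"
    using assms(1) \<open>c0 \<in> C\<close> by (simp add: e_def)
  ultimately show ?thesis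
    unfolding integral_multiple_le_def using \<open>t \<noteq> 0\<close> by (intro exI[of _ "\<bar>t\<bar>"]) auto
qed

lemma in_kernel_union_separated:
  assumes "separated a C S T" "in_kernel a C S y" "\<forall>c\<in>C. y c \<noteq> 0 \<longrightarrow> (\<exists>s\<in>S. a s c \<noteq> 0)"
  shows "in_kernel a C (S \<union> T) y"
proof -
  have "a r c * y c = 0" if "r \<in> T" "c \<in> C" for r c
    using assms(1,3) that unfolding separated_def by (cases "y c = 0") auto
  then have "(\<Sum>c\<in>C. a r c * y c) = 0" if "r \<in> T" for r
    using that by simp
  then show ?thesis
    using assms(2) unfolding in_kernel_def by auto
qed

text \<open>The part of \<open>g\<close> on the columns met by \<open>S\<close> is again in the kernel, hence a multiple
  of \<open>g\<close>; it agrees with \<open>g\<close> at \<open>c0\<close>, so \<open>g\<close> lives on those columns.\<close>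

lemma circuit_restrict_rows:
  fixes g :: "nat \<Rightarrow> 'a::idom"
  assumes g: "circuit a C R g" and "S \<subseteq> R" and sep: "separated a C S (R - S)"
    and c0: "g c0 \<noteq> 0" "s0 \<in> S" "a s0 c0 \<noteq> 0"
  shows "circuit a C S g"
proof -
  define touched where "touched c \<longleftrightarrow> (\<exists>s\<in>S. a s c \<noteq> 0)" for c
  have R: "S \<union> (R - S) = R"
    using \<open>S \<subseteq> R\<close> by auto
  have kernel_S: "in_kernel a C S g"
    using in_kernel_mono[OF circuitD(1)[OF g] \<open>S \<subseteq> R\<close>] .
  have kernel_R_if_touched: "in_kernel a C R y"
    if "in_kernel a C S y" "\<forall>c. y c \<noteq> 0 \<longrightarrow> touched c" for y
    using in_kernel_union_separated[OF sep that(1)] that(2) unfolding R touched_def by blast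
  define gS where "gS c = (if touched c then g c else 0)" for c
  have "(\<Sum>c\<in>C. a s c * gS c) = (\<Sum>c\<in>C. a s c * g c)" if "s \<in> S" for s
    using that unfolding gS_def touched_def by (intro sum.cong) auto
  then have "in_kernel a C S gS"
    using kernel_S unfolding in_kernel_def by (simp add: gS_def)
  then have "in_kernel a C R gS"
    by (rule kernel_R_if_touched) (simp add: gS_def)
  moreover have "supp gS \<subseteq> supp g"
    unfolding supp_def gS_def by auto
  ultimately obtain t where t: "gS = (\<lambda>c. t * g c)"
    using circuitD(3)[OF g] by blast
  have "touched c0"
    using c0 unfolding touched_def by auto
  then have "g c0 = t * g c0"
    using fun_cong[OF t, of c0] unfolding gS_def by simp
  then have "t = 1"
    using c0(1) by simp
  then have supp_touched: "\<forall>c. g c \<noteq> 0 \<longrightarrow> touched c"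
    using t unfolding gS_def by (auto simp: fun_eq_iff split: if_splits)
  have "\<exists>t. y = (\<lambda>c. t * g c)" if "in_kernel a C S y" "supp y \<subseteq> supp g" for y
  proof -
    have "in_kernel a C R y"
      using kernel_R_if_touched[OF that(1)] that(2) supp_touched unfolding supp_def by blast
    then show ?thesis
      using circuitD(3)[OF g _ that(2)] by blast
  qed
  then show ?thesis
    using circuitD(2)[OF g] kernel_S unfolding circuit_def by blast
qed

lemma integral_multiple_le_blocks:
  fixes g :: "nat \<Rightarrow> 'a::linordered_field"
  assumes "finite C" "1 \<le> K"
    and blocks: "\<And>r. r \<in> R \<Longrightarrow> \<exists>S. r \<in> S \<and> S \<subseteq> R \<and> separated a C S (R - S) \<and>
      (\<forall>g. circuit a C S g \<longrightarrow> integral_multiple_le C K g)"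
    and g: "circuit a C R g"
  shows "integral_multiple_le C K g"
proof -
  obtain c0 where c0: "g c0 \<noteq> 0"
    using circuitD(2)[OF g] by auto
  show ?thesis
  proof (cases "\<forall>r\<in>R. a r c0 = 0")
    case True
    then show ?thesis
      using integral_multiple_le_if_zero_column[OF assms(1) g c0] integral_multiple_le_mono
        \<open>1 \<le> K\<close> by blast
  next
    case False
    then obtain r where "r \<in> R" "a r c0 \<noteq> 0"
      by auto
    then obtain S where S: "r \<in> S" "S \<subseteq> R" "separated a C S (R - S)"
      "\<forall>g. circuit a C S g \<longrightarrow> integral_multiple_le C K g"
      using blocks by blast
    then show ?thesis
      using circuit_restrict_rows[OF g S(2,3) c0 S(1) \<open>a r c0 \<noteq> 0\<close>] by blast
  qed
qed

lemma exists_integral_conformal_kernel_vector: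
  fixes a :: "nat \<Rightarrow> nat \<Rightarrow> 'a::linordered_field"
  assumes "finite C"
    and bounded: "\<And>g. circuit a C R g \<Longrightarrow> integral_multiple_le C K g"
    and "in_kernel a C R z" "z \<noteq> (\<lambda>_. 0)" "(\<Sum>c\<in>C. b c * z c) \<le> 0"
  obtains w where "in_kernel a C R w" "conformal w z" "w \<noteq> (\<lambda>_. 0)" "\<forall>c. w c \<in> \<int>"
    "(\<Sum>c\<in>C. \<bar>w c\<bar>) \<le> K" "(\<Sum>c\<in>C. b c * w c) \<le> 0"
proof -
  obtain g where g: "circuit a C R g" "conformal g z" "(\<Sum>c\<in>C. b c * g c) \<le> 0"
    using exists_conformal_circuit_nonpos[OF assms(1,3-5)] by blast
  obtain t where t: "0 < t" "\<forall>c. t * g c \<in> \<int>" "(\<Sum>c\<in>C. \<bar>t * g c\<bar>) \<le> K"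
    using bounded[OF g(1)] unfolding integral_multiple_le_def by blast
  show ?thesis
  proof (rule that[of "\<lambda>c. t * g c"])
    show "in_kernel a C R (\<lambda>c. t * g c)"
      using in_kernel_scale[OF circuitD(1)[OF g(1)]] .
    show "conformal (\<lambda>c. t * g c) z"
      using conformal_pos_combination[OF g(2) g(2) t(1), of 0] by simp
    show "(\<lambda>c. t * g c) \<noteq> (\<lambda>_. 0)"
      using circuitD(2)[OF g(1)] t(1) by (auto simp: fun_eq_iff)
    have "(\<Sum>c\<in>C. b c * (t * g c)) = t * (\<Sum>c\<in>C. b c * g c)"
      by (simp add: sum_distrib_left algebra_simps)
    then show "(\<Sum>c\<in>C. b c * (t * g c)) \<le> 0"
      using t(1) g(3) by (simp add: mult_nonneg_nonpos)
  qed (use t in auto)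
qed

lemma abs_sum_mult_le:
  fixes b w :: "nat \<Rightarrow> 'a::linordered_idom"
  assumes "\<forall>c\<in>C. \<bar>b c\<bar> \<le> D"
  shows "\<bar>\<Sum>c\<in>C. b c * w c\<bar> \<le> D * (\<Sum>c\<in>C. \<bar>w c\<bar>)"
proof -
  have "\<bar>\<Sum>c\<in>C. b c * w c\<bar> \<le> (\<Sum>c\<in>C. \<bar>b c * w c\<bar>)"
    by (rule sum_abs)
  also have "\<dots> \<le> (\<Sum>c\<in>C. D * \<bar>w c\<bar>)"
    using assms by (intro sum_mono) (simp add: abs_mult mult_right_mono)
  finally show ?thesis
    by (simp add: sum_distrib_left)
qed

lemma sum_abs_lincomb_le:
  fixes x y :: "nat \<Rightarrow> 'a::linordered_idom"
  shows "(\<Sum>c\<in>C. \<bar>p * x c + q * y c\<bar>) \<le> \<bar>p\<bar> * (\<Sum>c\<in>C. \<bar>x c\<bar>) + \<bar>q\<bar> * (\<Sum>c\<in>C. \<bar>y c\<bar>)"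
proof -
  have "(\<Sum>c\<in>C. \<bar>p * x c + q * y c\<bar>) \<le> (\<Sum>c\<in>C. \<bar>p\<bar> * \<bar>x c\<bar> + \<bar>q\<bar> * \<bar>y c\<bar>)"
    by (intro sum_mono) (metis abs_mult abs_triangle_ineq)
  also have "\<dots> = \<bar>p\<bar> * (\<Sum>c\<in>C. \<bar>x c\<bar>) + \<bar>q\<bar> * (\<Sum>c\<in>C. \<bar>y c\<bar>)"
    by (simp add: sum.distrib sum_distrib_left)
  finally show ?thesis .
qed

lemma exists_row_eliminating_combination:
  fixes a :: "nat \<Rightarrow> nat \<Rightarrow> 'a::linordered_field"
  assumes "0 \<le> D" and row: "\<forall>c\<in>C. a v c \<in> \<int> \<and> \<bar>a v c\<bar> \<le> D"
    and w1: "in_kernel a C R w1" "conformal w1 z" "w1 \<noteq> (\<lambda>_. 0)" "\<forall>c. w1 c \<in> \<int>"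
      "(\<Sum>c\<in>C. \<bar>w1 c\<bar>) \<le> K" "(\<Sum>c\<in>C. a v c * w1 c) < 0"
    and w2: "in_kernel a C R w2" "conformal w2 z" "\<forall>c. w2 c \<in> \<int>"
      "(\<Sum>c\<in>C. \<bar>w2 c\<bar>) \<le> K" "0 < (\<Sum>c\<in>C. a v c * w2 c)"
  obtains w where "in_kernel a C (insert v R) w" "conformal w z" "w \<noteq> (\<lambda>_. 0)"
    "\<forall>c. w c \<in> \<int>" "(\<Sum>c\<in>C. \<bar>w c\<bar>) \<le> 2 * D * K\<^sup>2"
proof -
  define \<phi> where "\<phi> x = (\<Sum>c\<in>C. a v c * x c)" for x
  have \<phi>_lincomb: "\<phi> (\<lambda>c. p * x c + q * y c) = p * \<phi> x + q * \<phi> y" for p q x y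
    unfolding \<phi>_def by (simp add: sum.distrib sum_distrib_left algebra_simps)
  have \<phi>_Ints: "\<phi> x \<in> \<int>" if "\<forall>c. x c \<in> \<int>" for x
    unfolding \<phi>_def using row that by (intro Ints_sum Ints_mult) auto
  have "0 \<le> K"
    using sum_abs_ge_zero w1(5) by (rule order_trans)
  have \<phi>_bound: "\<bar>\<phi> x\<bar> \<le> D * K" if "(\<Sum>c\<in>C. \<bar>x c\<bar>) \<le> K" for x
  proof -
    have "\<bar>\<phi> x\<bar> \<le> D * (\<Sum>c\<in>C. \<bar>x c\<bar>)"
      unfolding \<phi>_def using abs_sum_mult_le[of C "a v" D x] row by blast
    also have "\<dots> \<le> D * K"
      using that \<open>0 \<le> D\<close> by (rule mult_left_mono)
    finally show ?thesis .
  qed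
  have p: "0 < \<phi> w2" and q: "0 \<le> - \<phi> w1"
    using w1(6) w2(5) unfolding \<phi>_def by auto
  define w where "w c = \<phi> w2 * w1 c + (- \<phi> w1) * w2 c" for c
  show ?thesis
  proof (rule that[of w])
    have "\<phi> w = 0"
      using \<phi>_lincomb[of "\<phi> w2" w1 "- \<phi> w1" w2] unfolding w_def[abs_def] by simp
    moreover have "in_kernel a C R w"
      unfolding w_def[abs_def] by (rule in_kernel_lincomb[OF w1(1) w2(1)])
    ultimately show "in_kernel a C (insert v R) w"
      unfolding in_kernel_insert \<phi>_def by simp
    show "conformal w z"
      unfolding w_def[abs_def] by (rule conformal_pos_combination[OF w1(2) w2(2) p q])
    show "w \<noteq> (\<lambda>_. 0)"
      unfolding w_def[abs_def] by (rule pos_combination_nonzero[OF w1(2) w2(2) p q w1(3)])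
    show "\<forall>c. w c \<in> \<int>"
      unfolding w_def using \<phi>_Ints[OF w1(4)] \<phi>_Ints[OF w2(3)] w1(4) w2(3)
      by (intro allI Ints_add Ints_mult Ints_minus) blast+
    have "(\<Sum>c\<in>C. \<bar>w c\<bar>) \<le> \<bar>\<phi> w2\<bar> * (\<Sum>c\<in>C. \<bar>w1 c\<bar>) + \<bar>- \<phi> w1\<bar> * (\<Sum>c\<in>C. \<bar>w2 c\<bar>)"
      unfolding w_def by (rule sum_abs_lincomb_le)
    also have "\<dots> \<le> (D * K) * K + (D * K) * K"
      using \<phi>_bound[OF w1(5)] \<phi>_bound[OF w2(4)] w1(5) w2(4) \<open>0 \<le> D\<close> \<open>0 \<le> K\<close>
      by (intro add_mono mult_mono) simp_all
    finally show "(\<Sum>c\<in>C. \<bar>w c\<bar>) \<le> 2 * D * K\<^sup>2"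
      by (simp add: power2_eq_square)
  qed
qed

lemma integral_multiple_le_insert_row:
  fixes a :: "nat \<Rightarrow> nat \<Rightarrow> 'a::linordered_field"
  assumes "finite C" "0 \<le> D"
    and row: "\<forall>c\<in>C. a v c \<in> \<int> \<and> \<bar>a v c\<bar> \<le> D"
    and bounded: "\<And>g. circuit a C R g \<Longrightarrow> integral_multiple_le C K g"
    and z: "circuit a C (insert v R) z"
  shows "integral_multiple_le C (K + 2 * D * K\<^sup>2) z"
proof -
  have "in_kernel a C (insert v R) z" and z_nonzero: "z \<noteq> (\<lambda>_. 0)"
    using circuitD(1,2)[OF z] .
  then have z_R: "in_kernel a C R z" "z \<noteq> (\<lambda>_. 0)" and z_v: "(\<Sum>c\<in>C. a v c * z c) = 0"
    unfolding in_kernel_insert by blast+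
  have z_v_nonpos: "(\<Sum>c\<in>C. a v c * z c) \<le> 0" "(\<Sum>c\<in>C. - a v c * z c) \<le> 0"
    using z_v by (simp_all add: sum_negf)
  obtain w1 where w1: "in_kernel a C R w1" "conformal w1 z" "w1 \<noteq> (\<lambda>_. 0)"
      "\<forall>c. w1 c \<in> \<int>" "(\<Sum>c\<in>C. \<bar>w1 c\<bar>) \<le> K" "(\<Sum>c\<in>C. a v c * w1 c) \<le> 0"
    by (rule exists_integral_conformal_kernel_vector[OF assms(1) bounded z_R z_v_nonpos(1)])
  obtain w2 where w2: "in_kernel a C R w2" "conformal w2 z" "w2 \<noteq> (\<lambda>_. 0)"
      "\<forall>c. w2 c \<in> \<int>" "(\<Sum>c\<in>C. \<bar>w2 c\<bar>) \<le> K" "(\<Sum>c\<in>C. - a v c * w2 c) \<le> 0"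
    by (rule exists_integral_conformal_kernel_vector[OF assms(1) bounded z_R z_v_nonpos(2)])
  have "0 \<le> K"
    using sum_abs_ge_zero w1(5) by (rule order_trans)
  then have le_bound: "K \<le> K + 2 * D * K\<^sup>2" "2 * D * K\<^sup>2 \<le> K + 2 * D * K\<^sup>2"
    using \<open>0 \<le> D\<close> by simp_all
  have bounded_if_row_zero: "integral_multiple_le C (K + 2 * D * K\<^sup>2) z"
    if "in_kernel a C R w" "(\<Sum>c\<in>C. a v c * w c) = 0" "conformal w z" "w \<noteq> (\<lambda>_. 0)"
      "\<forall>c. w c \<in> \<int>" "(\<Sum>c\<in>C. \<bar>w c\<bar>) \<le> K" for w
  proof (rule integral_multiple_le_if_conformal[OF z _ that(3-5)])
    show "in_kernel a C (insert v R) w"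
      unfolding in_kernel_insert using that(1,2) ..
    show "(\<Sum>c\<in>C. \<bar>w c\<bar>) \<le> K + 2 * D * K\<^sup>2"
      using that(6) le_bound(1) by (rule order_trans)
  qed
  show ?thesis
  proof (cases "(\<Sum>c\<in>C. a v c * w1 c) = 0 \<or> (\<Sum>c\<in>C. a v c * w2 c) = 0")
    case True
    then show ?thesis
      using bounded_if_row_zero[OF w1(1) _ w1(2-5)] bounded_if_row_zero[OF w2(1) _ w2(2-5)]
      by blast
  next
    case False
    then have neg: "(\<Sum>c\<in>C. a v c * w1 c) < 0" and pos: "0 < (\<Sum>c\<in>C. a v c * w2 c)"
      using w1(6) w2(6) by (simp_all add: sum_negf)
    obtain w where w: "in_kernel a C (insert v R) w" "conformal w z" "w \<noteq> (\<lambda>_. 0)"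
      "\<forall>c. w c \<in> \<int>" "(\<Sum>c\<in>C. \<bar>w c\<bar>) \<le> 2 * D * K\<^sup>2"
      by (rule exists_row_eliminating_combination[OF assms(2) row w1(1-5) neg w2(1,2,4,5) pos])
    have "(\<Sum>c\<in>C. \<bar>w c\<bar>) \<le> K + 2 * D * K\<^sup>2"
      using w(5) le_bound(2) by (rule order_trans)
    then show ?thesis
      by (rule integral_multiple_le_if_conformal[OF z w(1-4)])
  qed
qed

section \<open>Rooted trees\<close>

definition subtree :: "(nat \<times> nat) set \<Rightarrow> nat \<Rightarrow> nat set"
  where "subtree P v = {u. (u, v) \<in> P\<^sup>*}"

definition depth :: "(nat \<times> nat) set \<Rightarrow> nat \<Rightarrow> nat"
  where "depth P u = card {w. (u, w) \<in> P\<^sup>*}"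

lemma rooted_treeD:
  assumes "rooted_tree V P"
  shows "finite V" and "(v, u) \<in> P \<Longrightarrow> v \<in> V \<and> u \<in> V"
    and "(v, u) \<in> P \<Longrightarrow> (v, w) \<in> P \<Longrightarrow> u = w" and "(v, v) \<notin> P\<^sup>+"
  using assms unfolding rooted_tree_def by blast+

lemma rooted_tree_root:
  assumes "rooted_tree V P" "V \<noteq> {}"
  obtains r where "r \<in> V" "\<forall>u. (r, u) \<notin> P" "\<And>r'. r' \<in> V \<Longrightarrow> \<forall>u. (r', u) \<notin> P \<Longrightarrow> r' = r"
proof -
  have "\<exists>!r. r \<in> V \<and> (\<forall>u. (r, u) \<notin> P)"
    using assms unfolding rooted_tree_def by blast
  then show ?thesis
    using that unfolding Ex1_def by blast
qed

lemma finite_ancestors: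
  assumes "rooted_tree V P"
  shows "finite {w. (u, w) \<in> P\<^sup>*}"
proof -
  have "w \<in> insert u V" if "(u, w) \<in> P\<^sup>*" for w
    using that by (cases rule: rtranclE) (use rooted_treeD(2)[OF assms] in blast)+
  then have "{w. (u, w) \<in> P\<^sup>*} \<subseteq> insert u V"
    by blast
  then show ?thesis
    using rooted_treeD(1)[OF assms] finite_subset by blast
qed

lemma depth_less_child:
  assumes "rooted_tree V P" "(ch, v) \<in> P"
  shows "depth P v < depth P ch"
proof -
  have "(v, ch) \<notin> P\<^sup>*"
    using rooted_treeD(4)[OF assms(1)] assms(2) by (meson rtrancl_into_trancl1)
  then have "{w. (v, w) \<in> P\<^sup>*} \<subset> {w. (ch, w) \<in> P\<^sup>*}"
    using assms(2) by (auto intro: converse_rtrancl_into_rtrancl)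
  then show ?thesis
    unfolding depth_def using finite_ancestors[OF assms(1)] by (simp add: psubset_card_mono)
qed

lemma depth_le_tree_height:
  assumes "finite V" "u \<in> V"
  shows "depth P u \<le> tree_height V P"
  unfolding tree_height_def depth_def using assms by (intro Max_ge) auto

lemma depth_root:
  assumes "\<forall>u. (r, u) \<notin> P"
  shows "depth P r = 1"
proof -
  have "w = r" if "(r, w) \<in> P\<^sup>*" for w
    using that by (cases rule: converse_rtranclE) (use assms in auto)
  then have "{w. (r, w) \<in> P\<^sup>*} = {r}"
    by blast
  then show ?thesis
    unfolding depth_def by simp
qed

lemma ancestors_comparable:
  assumes "rooted_tree V P"
  shows "(u, x) \<in> P\<^sup>* \<Longrightarrow> (u, y) \<in> P\<^sup>* \<Longrightarrow> (x, y) \<in> P\<^sup>* \<or> (y, x) \<in> P\<^sup>*"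
proof (induction arbitrary: y rule: converse_rtrancl_induct)
  case base
  then show ?case
    by simp
next
  case (step u p)
  from step.prems show ?case
  proof (cases rule: converse_rtranclE)
    case base
    then show ?thesis
      using step.hyps by (meson converse_rtrancl_into_rtrancl)
  next
    case (step p')
    then have "p' = p"
      using rooted_treeD(3)[OF assms] \<open>(u, p) \<in> P\<close> step(1) by blast
    then show ?thesis
      using step.IH \<open>(p', y) \<in> P\<^sup>*\<close> by blast
  qed
qed

lemma subtree_subset:
  assumes "rooted_tree V P" "v \<in> V"
  shows "subtree P v \<subseteq> V"
proof
  fix u
  assume "u \<in> subtree P v"
  then have "(u, v) \<in> P\<^sup>*"
    unfolding subtree_def by simp
  then show "u \<in> V"
    by (cases rule: converse_rtranclE) (use assms rooted_treeD(2)[OF assms(1)] in blast)+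
qed

lemma subtree_root:
  assumes tree: "rooted_tree V P" and r: "r \<in> V" "\<forall>u. (r, u) \<notin> P"
  shows "subtree P r = V"
proof
  show "subtree P r \<subseteq> V"
    using subtree_subset[OF tree r(1)] .
  obtain r0 where r0: "\<And>r'. r' \<in> V \<Longrightarrow> \<forall>u. (r', u) \<notin> P \<Longrightarrow> r' = r0"
    using rooted_tree_root[OF tree] r(1) by blast
  have "u \<in> subtree P r" if "u \<in> V" for u
    using that
  proof (induction "depth P u" arbitrary: u rule: less_induct)
    case (less u)
    show ?case
    proof (cases "\<exists>p. (u, p) \<in> P")
      case True
      then obtain p where p: "(u, p) \<in> P"
        by blast
      then have "p \<in> subtree P r"
        using less.hyps[OF depth_less_child[OF tree p]] rooted_treeD(2)[OF tree p] by blast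
      then show ?thesis
        using p unfolding subtree_def by (simp add: converse_rtrancl_into_rtrancl)
    next
      case False
      then have "u = r"
        using r0[OF less.prems] r0[OF r] by blast
      then show ?thesis
        unfolding subtree_def by simp
    qed
  qed
  then show "V \<subseteq> subtree P r"
    by blast
qed

lemma child_subtree_containing:
  assumes "rooted_tree V P" "r \<in> subtree P v" "r \<noteq> v"
  obtains ch where "(ch, v) \<in> P" "r \<in> subtree P ch" "subtree P ch \<subseteq> subtree P v - {v}"
proof -
  have "(r, v) \<in> P\<^sup>+"
    using assms(2,3) unfolding subtree_def by (simp add: rtrancl_eq_or_trancl)
  then obtain ch where ch: "(r, ch) \<in> P\<^sup>*" "(ch, v) \<in> P"
    using tranclD2 by metis
  have "subtree P ch \<subseteq> subtree P v - {v}"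
  proof
    fix u
    assume "u \<in> subtree P ch"
    then have "(u, v) \<in> P\<^sup>+"
      using ch(2) unfolding subtree_def by simp
    moreover have "(v, v) \<notin> P\<^sup>+"
      using rooted_treeD(4)[OF assms(1)] .
    ultimately show "u \<in> subtree P v - {v}"
      unfolding subtree_def by auto
  qed
  then show ?thesis
    using that ch unfolding subtree_def by blast
qed

lemma not_closure_adj_child_subtree:
  assumes tree: "rooted_tree V P" and ch: "(ch, v) \<in> P" and s: "s \<in> subtree P ch"
    and y: "y \<in> subtree P v" "y \<noteq> v" "y \<notin> subtree P ch"
  shows "\<not> closure_adj P s y"
proof
  assume "closure_adj P s y"
  then consider "(y, s) \<in> P\<^sup>+" | "(s, y) \<in> P\<^sup>+"
    unfolding closure_adj_def ancestor_def by blast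
  then show False
  proof cases
    case 1
    then have "(y, ch) \<in> P\<^sup>*"
      using s unfolding subtree_def mem_Collect_eq by (meson trancl_into_rtrancl rtrancl_trans)
    then show False
      using y(3) unfolding subtree_def by simp
  next
    case 2
    then have "(ch, y) \<in> P\<^sup>*"
      using ancestors_comparable[OF tree, of s ch y] s y(3) unfolding subtree_def
      by (auto simp: trancl_into_rtrancl)
    moreover have "ch \<noteq> y"
      using y(3) unfolding subtree_def by auto
    ultimately obtain p where "(ch, p) \<in> P" "(p, y) \<in> P\<^sup>*"
      by (metis converse_rtranclE)
    then have "(v, y) \<in> P\<^sup>*"
      using rooted_treeD(3)[OF tree ch] by blast
    moreover have "(y, v) \<in> P\<^sup>+"
      using y(1,2) unfolding subtree_def by (simp add: rtrancl_eq_or_trancl)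
    ultimately have "(y, y) \<in> P\<^sup>+"
      by (rule trancl_rtrancl_trancl[rotated])
    then show False
      using rooted_treeD(4)[OF tree] by blast
  qed
qed

lemma separated_child_subtree:
  assumes tree: "rooted_tree V P" "v \<in> V" and ch: "(ch, v) \<in> P"
    and adj: "\<forall>s\<in>V. \<forall>y\<in>V. \<forall>c\<in>C. s \<noteq> y \<longrightarrow> a s c \<noteq> 0 \<longrightarrow> a y c \<noteq> 0 \<longrightarrow> closure_adj P s y"
  shows "separated a C (subtree P ch) (subtree P v - {v} - subtree P ch)"
  unfolding separated_def
proof (intro ballI impI)
  fix s y c
  assume s: "s \<in> subtree P ch" and y: "y \<in> subtree P v - {v} - subtree P ch"
    and "c \<in> C" "a s c \<noteq> 0"
  have "\<not> closure_adj P s y"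
    using not_closure_adj_child_subtree[OF tree(1) ch s] y by blast
  moreover have "s \<in> subtree P v"
    using rtrancl_into_rtrancl[of s ch P v] s ch unfolding subtree_def by simp
  then have "s \<in> V" "y \<in> V"
    using y subtree_subset[OF tree] by blast+
  moreover have "s \<noteq> y"
    using s y by blast
  ultimately show "a y c = 0"
    using adj \<open>c \<in> C\<close> \<open>a s c \<noteq> 0\<close> by blast
qed

section \<open>Circuits of matrices with a td-decomposition of the dual graph\<close>

primrec circuit_bound :: "nat \<Rightarrow> int \<Rightarrow> int" where
  "circuit_bound 0 D = 1"
| "circuit_bound (Suc h) D = circuit_bound h D + 2 * D * (circuit_bound h D)\<^sup>2"

lemma circuit_bound_ge_1: "0 \<le> D \<Longrightarrow> 1 \<le> circuit_bound h D"
  by (induction h) (simp_all add: add_increasing2)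

lemma integral_multiple_le_subtree:
  fixes a :: "nat \<Rightarrow> nat \<Rightarrow> 'a::linordered_field"
  assumes "finite C" and tree: "rooted_tree V P" and "0 \<le> D"
    and entries: "\<forall>r\<in>V. \<forall>c\<in>C. a r c \<in> \<int> \<and> \<bar>a r c\<bar> \<le> of_int D"
    and adj: "\<forall>s\<in>V. \<forall>y\<in>V. \<forall>c\<in>C. s \<noteq> y \<longrightarrow> a s c \<noteq> 0 \<longrightarrow> a y c \<noteq> 0 \<longrightarrow> closure_adj P s y"
  shows "v \<in> V \<Longrightarrow> tree_height V P < depth P v + h \<Longrightarrow> circuit a C (subtree P v) z \<Longrightarrow>
    integral_multiple_le C (of_int (circuit_bound h D)) z"
proof (induction h arbitrary: v z)
  case 0
  then show ?case
    using depth_le_tree_height[OF rooted_treeD(1)[OF tree], of v P] by simp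
next
  case (Suc h)
  define K :: 'a where "K = of_int (circuit_bound h D)"
  have "1 \<le> K"
    unfolding K_def using circuit_bound_ge_1[OF \<open>0 \<le> D\<close>] by simp
  have bounded: "integral_multiple_le C K g" if "circuit a C (subtree P v - {v}) g" for g
  proof (rule integral_multiple_le_blocks[OF assms(1) \<open>1 \<le> K\<close> _ that])
    fix r
    assume "r \<in> subtree P v - {v}"
    then obtain ch where ch: "(ch, v) \<in> P" "r \<in> subtree P ch" "subtree P ch \<subseteq> subtree P v - {v}"
      using child_subtree_containing[OF tree] by blast
    have "ch \<in> V"
      using rooted_treeD(2)[OF tree ch(1)] by blast
    moreover have "tree_height V P < depth P ch + h"
      using depth_less_child[OF tree ch(1)] Suc.prems(2) by simp
    ultimately have "\<forall>g. circuit a C (subtree P ch) g \<longrightarrow> integral_multiple_le C K g"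
      using Suc.IH unfolding K_def by blast
    then show "\<exists>S. r \<in> S \<and> S \<subseteq> subtree P v - {v} \<and> separated a C S (subtree P v - {v} - S) \<and>
        (\<forall>g. circuit a C S g \<longrightarrow> integral_multiple_le C K g)"
      using ch(2,3) separated_child_subtree[OF tree Suc.prems(1) ch(1) adj]
      by (intro exI[of _ "subtree P ch"]) blast
  qed
  have row: "\<forall>c\<in>C. a v c \<in> \<int> \<and> \<bar>a v c\<bar> \<le> of_int D"
    using entries Suc.prems(1) by blast
  have "insert v (subtree P v - {v}) = subtree P v"
    unfolding subtree_def by auto
  then have z: "circuit a C (insert v (subtree P v - {v})) z"
    using Suc.prems(3) by simp
  have "(0::'a) \<le> of_int D"
    using \<open>0 \<le> D\<close> by simp
  then have "integral_multiple_le C (K + 2 * of_int D * K\<^sup>2) z"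
    using integral_multiple_le_insert_row[OF assms(1) _ row bounded z] by blast
  then show ?case
    unfolding K_def by simp
qed

theorem integral_multiple_le_tree_height:
  fixes a :: "nat \<Rightarrow> nat \<Rightarrow> 'a::linordered_field"
  assumes "finite C" "rooted_tree V P" "0 \<le> D"
    and "\<forall>r\<in>V. \<forall>c\<in>C. a r c \<in> \<int> \<and> \<bar>a r c\<bar> \<le> of_int D"
    and "\<forall>s\<in>V. \<forall>y\<in>V. \<forall>c\<in>C. s \<noteq> y \<longrightarrow> a s c \<noteq> 0 \<longrightarrow> a y c \<noteq> 0 \<longrightarrow> closure_adj P s y"
    and z: "circuit a C V z"
  shows "integral_multiple_le C (of_int (circuit_bound (tree_height V P) D)) z"
proof (cases "V = {}")
  case True
  obtain c0 where "z c0 \<noteq> 0"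
    using circuitD(2)[OF z] by auto
  moreover have "\<forall>r\<in>V. a r c0 = 0"
    using True by simp
  ultimately have "integral_multiple_le C 1 z"
    by (rule integral_multiple_le_if_zero_column[OF assms(1) z])
  moreover have "tree_height V P = 0"
    using True by (simp add: tree_height_def)
  ultimately show ?thesis
    by simp
next
  case False
  then obtain r where r: "r \<in> V" "\<forall>u. (r, u) \<notin> P"
    by (rule rooted_tree_root[OF assms(2)])
  have "tree_height V P < depth P r + tree_height V P"
    using depth_root[OF r(2)] by simp
  moreover have "circuit a C (subtree P r) z"
    unfolding subtree_root[OF assms(2) r] by (rule z)
  ultimately show ?thesis
    by (rule integral_multiple_le_subtree[OF assms(1-5) r(1)])
qed

section \<open>Inverses of basis matrices\<close>

text \<open>The matrix \<open>[M | -e_j]\<close> and the column \<open>j\<close> of \<open>N\<close> extended by an entry \<open>1\<close>, as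
  entry functions in the format of \<open>in_kernel\<close>.\<close>

definition append_neg_unit_column :: "'a::ring_1 mat \<Rightarrow> nat \<Rightarrow> nat \<Rightarrow> nat \<Rightarrow> 'a"
  where "append_neg_unit_column M j r c =
    (if c < dim_col M then M $$ (r, c) else if c = dim_col M \<and> r = j then -1 else 0)"

definition extend_column :: "'a::zero_neq_one mat \<Rightarrow> nat \<Rightarrow> nat \<Rightarrow> 'a"
  where "extend_column N j c = (if c < dim_row N then N $$ (c, j) else if c = dim_row N then 1 else 0)"

lemma sum_append_neg_unit_column:
  assumes "M \<in> carrier_mat m m"
  shows "(\<Sum>c\<in>{0..m}. append_neg_unit_column M j r c * x c) =
    (\<Sum>c\<in>{0..<m}. M $$ (r, c) * x c) - (if r = j then x m else 0)"
proof -
  have "{0..m} = insert m {0..<m}"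
    by auto
  moreover have "(\<Sum>c\<in>{0..<m}. append_neg_unit_column M j r c * x c) =
      (\<Sum>c\<in>{0..<m}. M $$ (r, c) * x c)"
    using assms by (intro sum.cong) (simp_all add: append_neg_unit_column_def)
  ultimately show ?thesis
    using assms by (simp add: append_neg_unit_column_def)
qed

lemma extend_column_in_kernel:
  assumes M: "M \<in> carrier_mat m m" and N: "N \<in> carrier_mat m m" and MN: "M * N = 1\<^sub>m m"
    and "j < m"
  shows "in_kernel (append_neg_unit_column M j) {0..m} {0..<m} (extend_column N j)"
proof -
  have "(\<Sum>c\<in>{0..<m}. M $$ (r, c) * extend_column N j c) = (if r = j then 1 else 0)"
    if "r < m" for r
  proof -
    have "(\<Sum>c\<in>{0..<m}. M $$ (r, c) * extend_column N j c) = (\<Sum>c\<in>{0..<m}. M $$ (r, c) * N $$ (c, j))"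
      using N by (intro sum.cong) (simp_all add: extend_column_def)
    also have "\<dots> = (M * N) $$ (r, j)"
      using M N that \<open>j < m\<close> by (simp add: scalar_prod_def)
    finally show ?thesis
      using MN that \<open>j < m\<close> by simp
  qed
  then show ?thesis
    using N unfolding in_kernel_def
    by (simp add: sum_append_neg_unit_column[OF M] extend_column_def)
qed

lemma in_kernel_append_neg_unit_column_zero:
  fixes M :: "'a::field mat"
  assumes M: "M \<in> carrier_mat m m" and "det M \<noteq> 0"
    and y: "in_kernel (append_neg_unit_column M j) {0..m} {0..<m} y" and "y m = 0"
  shows "y = (\<lambda>_. 0)"
proof -
  define u where "u = vec m y"
  have "M *\<^sub>v u = 0\<^sub>v m"
  proof (rule eq_vecI)
    fix r
    assume "r < dim_vec (0\<^sub>v m)"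
    then have "r < m"
      by simp
    have "(M *\<^sub>v u) $ r = (\<Sum>c\<in>{0..<m}. M $$ (r, c) * y c)"
      using M \<open>r < m\<close> unfolding u_def by (simp add: scalar_prod_def)
    also have "\<dots> = (\<Sum>c\<in>{0..m}. append_neg_unit_column M j r c * y c)"
      using \<open>y m = 0\<close> by (simp add: sum_append_neg_unit_column[OF M])
    also have "\<dots> = 0"
      using y \<open>r < m\<close> unfolding in_kernel_def by simp
    finally show "(M *\<^sub>v u) $ r = 0\<^sub>v m $ r"
      using \<open>r < m\<close> by simp
  qed (use M in simp)
  moreover have "u \<in> carrier_vec m"
    unfolding u_def by simp
  ultimately have "u = 0\<^sub>v m"
    using det_0_iff_vec_prod_zero_field[OF M] \<open>det M \<noteq> 0\<close> by blast
  have "y c = 0" for c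
  proof (cases "c < m")
    case True
    then show ?thesis
      using arg_cong[OF \<open>u = 0\<^sub>v m\<close>, of "\<lambda>v. v $ c"] unfolding u_def by simp
  next
    case False
    then show ?thesis
      using y \<open>y m = 0\<close> unfolding in_kernel_def by (cases "c = m") auto
  qed
  then show ?thesis
    by (rule ext)
qed

text \<open>The kernel of \<open>[M | -e_j]\<close> is one-dimensional, so its nonzero elements are circuits.\<close>

lemma extend_column_circuit:
  fixes M N :: "'a::field mat"
  assumes M: "M \<in> carrier_mat m m" and N: "N \<in> carrier_mat m m" and MN: "M * N = 1\<^sub>m m"
    and "j < m"
  shows "circuit (append_neg_unit_column M j) {0..m} {0..<m} (extend_column N j)"
proof -
  let ?z = "extend_column N j"
  have kernel_z: "in_kernel (append_neg_unit_column M j) {0..m} {0..<m} ?z"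
    by (rule extend_column_in_kernel[OF M N MN \<open>j < m\<close>])
  have "det M * det N = 1"
    using det_mult[OF M N] MN by simp
  then have "det M \<noteq> 0"
    by auto
  have "?z m = 1"
    using N by (simp add: extend_column_def)
  have "y = (\<lambda>c. y m * ?z c)" if y: "in_kernel (append_neg_unit_column M j) {0..m} {0..<m} y" for y
  proof -
    have zero: "(\<lambda>c. y c - y m * ?z c) = (\<lambda>_. 0)"
      using in_kernel_append_neg_unit_column_zero[OF M \<open>det M \<noteq> 0\<close> in_kernel_diff[OF y kernel_z]]
        \<open>?z m = 1\<close> by simp
    have "y c = y m * ?z c" for c
      using fun_cong[OF zero, of c] by simp
    then show ?thesis
      by (rule ext)
  qed
  moreover have "?z \<noteq> (\<lambda>_. 0)"
    using \<open>?z m = 1\<close> by (auto dest: fun_cong[where x = m])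
  ultimately show ?thesis
    using kernel_z unfolding circuit_def by blast
qed

lemma right_inverse_row_nonzero:
  fixes M :: "'a::semiring_1 mat"
  assumes "M \<in> carrier_mat m m" "N \<in> carrier_mat m m" "M * N = 1\<^sub>m m" "i < m"
  shows "\<exists>c<m. M $$ (i, c) \<noteq> 0"
proof (rule ccontr)
  assume "\<not> (\<exists>c<m. M $$ (i, c) \<noteq> 0)"
  then have "(M * N) $$ (i, i) = 0"
    using assms(1,2,4) by (simp add: scalar_prod_def)
  then show False
    using assms by simp
qed

lemma append_neg_unit_column_entries:
  fixes M :: "int mat"
  assumes "M \<in> carrier_mat m m" "1 \<le> D" "\<And>r c. r < m \<Longrightarrow> c < m \<Longrightarrow> \<bar>M $$ (r, c)\<bar> \<le> D"
  shows "\<forall>r\<in>{0..<m}. \<forall>c\<in>{0..m}. append_neg_unit_column (map_mat rat_of_int M) j r c \<in> \<int> \<and>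
    \<bar>append_neg_unit_column (map_mat rat_of_int M) j r c\<bar> \<le> of_int D"
  using assms by (auto simp: append_neg_unit_column_def simp flip: of_int_abs)

text \<open>The column \<open>-e_j\<close> has a single nonzero entry, so appending it adds no edge to the dual
  graph.\<close>

lemma append_neg_unit_column_closure_adj:
  fixes M :: "int mat"
  assumes "M \<in> carrier_mat m m" "td_decomposition {0..<m} (dual_graph_edge M) P"
  shows "\<forall>s\<in>{0..<m}. \<forall>y\<in>{0..<m}. \<forall>c\<in>{0..m}. s \<noteq> y \<longrightarrow>
    append_neg_unit_column (map_mat rat_of_int M) j s c \<noteq> 0 \<longrightarrow>
    append_neg_unit_column (map_mat rat_of_int M) j y c \<noteq> 0 \<longrightarrow> closure_adj P s y"
proof (intro ballI impI)
  fix s y c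
  assume "s \<in> {0..<m}" "y \<in> {0..<m}" "c \<in> {0..m}" "s \<noteq> y"
    and "append_neg_unit_column (map_mat rat_of_int M) j s c \<noteq> 0"
    and "append_neg_unit_column (map_mat rat_of_int M) j y c \<noteq> 0"
  then have "dual_graph_edge M s y"
    using assms(1) unfolding dual_graph_edge_def append_neg_unit_column_def
    by (auto split: if_splits)
  then show "closure_adj P s y"
    using assms(2) unfolding td_decomposition_def by blast
qed

lemma inverse_column_common_denominator:
  fixes M :: "int mat"
  assumes M: "M \<in> carrier_mat m m" and N: "N \<in> carrier_mat m m"
    and MN: "map_mat rat_of_int M * N = 1\<^sub>m m"
    and td: "td_decomposition {0..<m} (dual_graph_edge M) P"
    and entries: "\<And>r c. r < m \<Longrightarrow> c < m \<Longrightarrow> \<bar>M $$ (r, c)\<bar> \<le> D" and "j < m"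
  obtains T where "0 < T" "T \<le> circuit_bound (tree_height {0..<m} P) D"
    "\<And>i. i < m \<Longrightarrow> of_int T * N $$ (i, j) \<in> \<int>"
proof -
  let ?M = "map_mat rat_of_int M"
  let ?z = "extend_column N j"
  have "?M \<in> carrier_mat m m"
    using M by simp
  obtain c where "c < m" "?M $$ (j, c) \<noteq> 0"
    using right_inverse_row_nonzero[OF \<open>?M \<in> carrier_mat m m\<close> N MN \<open>j < m\<close>] by blast
  then have "M $$ (j, c) \<noteq> 0"
    using M \<open>j < m\<close> by simp
  then have "1 \<le> D"
    using entries[OF \<open>j < m\<close> \<open>c < m\<close>] by linarith
  have "rooted_tree {0..<m} P"
    using td unfolding td_decomposition_def by blast
  then obtain t where t: "0 < t" "\<forall>c. t * ?z c \<in> \<int>"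
    "(\<Sum>c\<in>{0..m}. \<bar>t * ?z c\<bar>) \<le> of_int (circuit_bound (tree_height {0..<m} P) D)"
    using integral_multiple_le_tree_height[OF _ _ _ append_neg_unit_column_entries[OF M \<open>1 \<le> D\<close> entries]
        append_neg_unit_column_closure_adj[OF M td]
        extend_column_circuit[OF \<open>?M \<in> carrier_mat m m\<close> N MN \<open>j < m\<close>]] \<open>1 \<le> D\<close>
    unfolding integral_multiple_le_def by auto
  have "?z m = 1"
    using N by (simp add: extend_column_def)
  then have "t \<in> \<int>"
    using t(2)[rule_format, of m] by simp
  then obtain T where T: "t = of_int T"
    by (auto elim: Ints_cases)
  have "\<bar>t * ?z m\<bar> \<le> (\<Sum>c\<in>{0..m}. \<bar>t * ?z c\<bar>)"
    by (rule member_le_sum) auto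
  then have "T \<le> circuit_bound (tree_height {0..<m} P) D"
    using t(1,3) T \<open>?z m = 1\<close> by simp
  moreover have "of_int T * N $$ (i, j) \<in> \<int>" if "i < m" for i
  proof -
    have "?z i = N $$ (i, j)"
      using that N by (simp add: extend_column_def)
    then show ?thesis
      using t(2)[rule_format, of i] T by simp
  qed
  ultimately show ?thesis
    using that t(1) T by simp
qed

lemma denominator_le_integral_multiple:
  assumes "0 < T" "of_int T * q \<in> \<int>"
  shows "snd (quotient_of q) \<le> T"
proof -
  obtain p d where pd: "quotient_of q = (p, d)"
    by (cases "quotient_of q") auto
  obtain k where "of_int T * q = of_int k"
    using assms(2) Ints_cases by metis
  then have "of_int (T * p) = (of_int (k * d) :: rat)"
    using quotient_of_div[OF pd] quotient_of_denom_pos[OF pd] by (simp add: field_simps)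
  then have "d dvd T * p"
    by (metis dvd_triv_right of_int_eq_iff)
  then have "d dvd T"
    using quotient_of_coprime[OF pd] by (metis coprime_commute coprime_dvd_mult_left_iff)
  then show ?thesis
    using assms(1) pd by (simp add: zdvd_imp_le)
qed

lemma fr_le:
  assumes "1 \<le> K"
    and "\<And>i j. i < dim_row N \<Longrightarrow> j < dim_col N \<Longrightarrow> snd (quotient_of (N $$ (i, j))) \<le> K"
  shows "fr N \<le> K"
proof -
  have "finite {snd (quotient_of (N $$ (i, j))) | i j. i < dim_row N \<and> j < dim_col N}"
    by (rule finite_image_set2) auto
  then show ?thesis
    unfolding fr_def using assms by (subst Max_le_iff) auto
qed

theorem fr_inverse_le:
  fixes M :: "int mat"
  assumes "M \<in> carrier_mat m m" "N \<in> carrier_mat m m" "map_mat rat_of_int M * N = 1\<^sub>m m"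
    and "td_decomposition {0..<m} (dual_graph_edge M) P"
    and "0 \<le> D" "\<And>r c. r < m \<Longrightarrow> c < m \<Longrightarrow> \<bar>M $$ (r, c)\<bar> \<le> D"
  shows "fr N \<le> circuit_bound (tree_height {0..<m} P) D"
proof (rule fr_le)
  show "1 \<le> circuit_bound (tree_height {0..<m} P) D"
    using circuit_bound_ge_1[OF assms(5)] .
  fix i j
  assume "i < dim_row N" "j < dim_col N"
  then have "i < m" "j < m"
    using assms(2) by auto
  obtain T where "0 < T" "T \<le> circuit_bound (tree_height {0..<m} P) D"
    "of_int T * N $$ (i, j) \<in> \<int>"
    using inverse_column_common_denominator[OF assms(1-4,6) \<open>j < m\<close>] \<open>i < m\<close> by metis
  then show "snd (quotient_of (N $$ (i, j))) \<le> circuit_bound (tree_height {0..<m} P) D"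
    using denominator_le_integral_multiple by fastforce
qed

section \<open>Column submatrices\<close>

lemma submatrix_UNIV_columns:
  assumes A: "A \<in> carrier_mat m n" and B: "B \<subseteq> {0..<n}" "card B = k"
  shows "submatrix A UNIV B \<in> carrier_mat m k"
    and "i < m \<Longrightarrow> j < k \<Longrightarrow> submatrix A UNIV B $$ (i, j) = A $$ (i, pick B j)"
    and "j < k \<Longrightarrow> pick B j < n"
proof -
  have rows: "card {i. i < dim_row A \<and> i \<in> UNIV} = m"
    using A by simp
  have "{j. j < dim_col A \<and> j \<in> B} = B"
    using A B by auto
  then have cols: "card {j. j < dim_col A \<and> j \<in> B} = k"
    using B by simp
  show "submatrix A UNIV B \<in> carrier_mat m k"
    unfolding carrier_mat_def using rows cols by (simp add: dim_submatrix)
  show "submatrix A UNIV B $$ (i, j) = A $$ (i, pick B j)" if "i < m" "j < k"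
    using submatrix_index[of i A UNIV j B] rows cols that by (simp add: pick_UNIV)
  show "pick B j < n" if "j < k"
    using pick_in_set_le[of j B] that B by auto
qed

lemma abs_le_max_abs_entry:
  "i < dim_row A \<Longrightarrow> j < dim_col A \<Longrightarrow> \<bar>A $$ (i, j)\<bar> \<le> max_abs_entry A"
  unfolding max_abs_entry_def by (intro Max_ge finite.insertI finite_image_set2) auto

lemma max_abs_entry_nonneg: "0 \<le> max_abs_entry A"
  unfolding max_abs_entry_def by (intro Max_ge finite.insertI finite_image_set2) auto

lemma td_decomposition_submatrix_UNIV:
  assumes A: "A \<in> carrier_mat m n" and B: "B \<subseteq> {0..<n}" "card B = m"
    and td: "td_decomposition {0..<m} (dual_graph_edge A) P"
  shows "td_decomposition {0..<m} (dual_graph_edge (submatrix A UNIV B)) P"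
proof -
  note sub = submatrix_UNIV_columns[OF A B]
  have dims: "dim_row (submatrix A UNIV B) = m" "dim_col (submatrix A UNIV B) = m"
    using sub(1) by auto
  have "dual_graph_edge A s y" if edge: "dual_graph_edge (submatrix A UNIV B) s y" for s y
  proof -
    obtain c where "s < m" "y < m" "s \<noteq> y" "c < m"
      "submatrix A UNIV B $$ (s, c) \<noteq> 0" "submatrix A UNIV B $$ (y, c) \<noteq> 0"
      using edge unfolding dual_graph_edge_def dims by blast
    then show ?thesis
      using A sub(2)[of s c] sub(2)[of y c] sub(3)[of c] unfolding dual_graph_edge_def by auto
  qed
  then show ?thesis
    using td unfolding td_decomposition_def by blast
qed

theorem corollary3:
  shows "\<exists>g :: nat \<Rightarrow> int \<Rightarrow> int.
    \<forall>(A :: int mat) m n P B.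
      A \<in> carrier_mat m n \<longrightarrow>
      td_decomposition {0..<m} (dual_graph_edge A) P \<longrightarrow>
      B \<subseteq> {0..<n} \<longrightarrow> card B = m \<longrightarrow>
      invertible_mat (map_mat rat_of_int (submatrix A UNIV B)) \<longrightarrow>
      (\<forall>Binv \<in> carrier_mat m m.
         map_mat rat_of_int (submatrix A UNIV B) * Binv = 1\<^sub>m m \<longrightarrow>
         fr Binv \<le> g (tree_height {0..<m} P) (max_abs_entry A))"
proof (intro exI[of _ circuit_bound] allI impI ballI)
  fix A :: "int mat" and m n P B and Binv :: "rat mat"
  assume A: "A \<in> carrier_mat m n" and td: "td_decomposition {0..<m} (dual_graph_edge A) P"
    and B: "B \<subseteq> {0..<n}" "card B = m"
    and "invertible_mat (map_mat rat_of_int (submatrix A UNIV B))"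
    \<comment> \<open>not needed: the right inverse \<open>Binv\<close> already forces invertibility\<close>
    and Binv: "Binv \<in> carrier_mat m m"
    and inverse: "map_mat rat_of_int (submatrix A UNIV B) * Binv = 1\<^sub>m m"
  note sub = submatrix_UNIV_columns[OF A B]
  have entries: "\<bar>submatrix A UNIV B $$ (r, c)\<bar> \<le> max_abs_entry A" if "r < m" "c < m" for r c
    using abs_le_max_abs_entry[of r A "pick B c"] sub(2,3) A that by simp
  show "fr Binv \<le> circuit_bound (tree_height {0..<m} P) (max_abs_entry A)"
    by (rule fr_inverse_le[OF sub(1) Binv inverse td_decomposition_submatrix_UNIV[OF A B td]
          max_abs_entry_nonneg entries])
qed

end
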